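(* Assume $N_k=N>0$ for all $k\in[n]$ and $F\ge nN$. Let $\boldsymbol O^*\in\mathbb R^{\mathcal N}$ be given by $O^*_{\mathcal N}=N/2$ and $O^*_i=0$ for $i<\mathcal N$ (i.e. the whole group $[n]$ uniquely shares $N/2$ points and no other subgroup shares any). Then $\boldsymbol O^*\in\Omega$ and $\boldsymbol O^*$ is a global maximiser of $T$ over $\Omega$, i.e. $T(\boldsymbol O)\le T(\boldsymbol O^* )$ for all $\boldsymbol O\in\Omega$.
   Context: Fix an integer $n\ge2$ and write $[m]=\{1,\dots,m\}$. Let $\mathcal X$ be the collection of subsets of $[n]$ with at least two elements, $\mathcal N=2^n-n-1$, and let $I:\mathcal X\to[\mathcal N]$ be a bijection such that $A\subsetneq B$ implies $I(A)<I(B)$ (so $I([n])=\mathcal N$). Write $f(c)=|I^{-1}(c)|$, $S(c)=\{i\in[\mathcal N]:I^{-1}(c)\subseteq I^{-1}(i)\}$, $B(c)=\{i\in[\mathcal N]:I^{-1}(i)\subsetneq I^{-1}(c)\}$, and for $k\in[n]$, $\tilde S(k)=\{i\in[\mathcal N]:k\in I^{-1}(i)\}$. With effective knowledges $N_k'=\min\{N_k,F\}$ (here all equal to $N$), the objective is $$T(\boldsymbol O)=\sum_{c=1}^{\mathcal N}\frac{\sum_{a\in S(c)}O_a}{\prod_{k\in I^{-1}(c)}N_k'}\Big(\sum_{k\in I^{-1}(c)}N_k'-f(c)\sum_{a\in S(c)}O_a-(f(c)-1)\sum_{a\in B(c)}O_a\Big).$$ The (relaxed, real-valued) feasible region is $\Omega=\{\boldsymbol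 O\in\mathbb R^{\mathcal N}:\boldsymbol O\ge\boldsymbol 0,\ \sum_{i\in\tilde S(k)}O_i\le N_k'\ \forall k\in[n],\ \sum_{k=1}^nN_k'-\sum_{c=1}^{\mathcal N}(f(c)-1)O_c\le F\}$; under the stated assumptions this is $\{\boldsymbol O\ge\boldsymbol 0:\sum_{i\in\tilde S(k)}O_i\le N\ \forall k\}$. *)

theory Defs
  imports Complex_Main
begin

definition Xsets :: "nat \<Rightarrow> nat set set" where
  "Xsets n = {A. A \<subseteq> {1..n} \<and> 2 \<le> card A}"

definition calN :: "nat \<Rightarrow> nat" where
  "calN n = 2 ^ n - n - 1"

definition valid_index :: "nat \<Rightarrow> (nat set \<Rightarrow> nat) \<Rightarrow> bool" where
  "valid_index n I \<longleftrightarrow> bij_betw I (Xsets n) {1..calN n} \<and>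
     (\<forall>A\<in>Xsets n. \<forall>B\<in>Xsets n. A \<subset> B \<longrightarrow> I A < I B)"

definition Iinv :: "nat \<Rightarrow> (nat set \<Rightarrow> nat) \<Rightarrow> nat \<Rightarrow> nat set" where
  "Iinv n I c = inv_into (Xsets n) I c"

definition fsz :: "nat \<Rightarrow> (nat set \<Rightarrow> nat) \<Rightarrow> nat \<Rightarrow> nat" where
  "fsz n I c = card (Iinv n I c)"

definition Ssup :: "nat \<Rightarrow> (nat set \<Rightarrow> nat) \<Rightarrow> nat \<Rightarrow> nat set" where
  "Ssup n I c = {i \<in> {1..calN n}. Iinv n I c \<subseteq> Iinv n I i}"

definition Bsub :: "nat \<Rightarrow> (nat set \<Rightarrow> nat) \<Rightarrow> nat \<Rightarrow> nat set" where
  "Bsub n I c = {i \<in> {1..calN n}. Iinv n I i \<subset> Iinv n I c}"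

definition Stilde :: "nat \<Rightarrow> (nat set \<Rightarrow> nat) \<Rightarrow> nat \<Rightarrow> nat set" where
  "Stilde n I k = {i \<in> {1..calN n}. k \<in> Iinv n I i}"

definition Neff :: "(nat \<Rightarrow> real) \<Rightarrow> real \<Rightarrow> nat \<Rightarrow> real" where
  "Neff Nk F k = min (Nk k) F"

definition Tobj :: "nat \<Rightarrow> (nat set \<Rightarrow> nat) \<Rightarrow> (nat \<Rightarrow> real) \<Rightarrow> real \<Rightarrow> (nat \<Rightarrow> real) \<Rightarrow> real" where
  "Tobj n I Nk F Ov =
    (\<Sum>c = 1..calN n.
       (\<Sum>a\<in>Ssup n I c. Ov a) / (\<Prod>k\<in>Iinv n I c. Neff Nk F k) *
       ((\<Sum>k\<in>Iinv n I c. Neff Nk F k)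
        - real (fsz n I c) * (\<Sum>a\<in>Ssup n I c. Ov a)
        - (real (fsz n I c) - 1) * (\<Sum>a\<in>Bsub n I c. Ov a)))"

text \<open>Feasible region Omega (vectors indexed by 1..calN n; values outside are irrelevant).\<close>
definition Omega :: "nat \<Rightarrow> (nat set \<Rightarrow> nat) \<Rightarrow> (nat \<Rightarrow> real) \<Rightarrow> real \<Rightarrow> (nat \<Rightarrow> real) set" where
  "Omega n I Nk F = {Ov.
     (\<forall>i\<in>{1..calN n}. 0 \<le> Ov i) \<and>
     (\<forall>k\<in>{1..n}. (\<Sum>i\<in>Stilde n I k. Ov i) \<le> Neff Nk F k) \<and>
     (\<Sum>k = 1..n. Neff Nk F k) - (\<Sum>c = 1..calN n. (real (fsz n I c) - 1) * Ov c) \<le> F}"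

end

theory Submission
  imports Defs
begin

text \<open>With all effective knowledges equal to \<open>N\<close>, the summand of \<open>T\<close> at \<open>c\<close> is
  \<open>s (f N - f s - (f - 1) b) / N^f\<close> with \<open>s = \<Sum>\<^bsub>S(c)\<^esub> O \<ge> 0\<close>, \<open>b = \<Sum>\<^bsub>B(c)\<^esub> O \<ge> 0\<close> and
  \<open>f \<ge> 1\<close>, which is at most \<open>f s (N - s) / N^f \<le> f (N/2)\<^sup>2 / N^f\<close>. So \<open>T\<close> is bounded
  summand by summand, and the bound is attained simultaneously for all \<open>c\<close> by \<open>O\<^sup>*\<close>:
  \<open>[n]\<close> contains every \<open>I\<^sup>-\<^sup>1(c)\<close>, so \<open>s = N/2\<close>, and \<open>[n]\<close> is a proper subset of none of
  them, so \<open>b = 0\<close>.\<close>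

lemma summand_le_at_half:
  fixes s b f N P :: real
  assumes "0 \<le> s" "0 \<le> b" "1 \<le> f" "0 < P"
  shows "s / P * (f * N - f * s - (f - 1) * b) \<le> N / 2 / P * (f * N - f * (N / 2))"
proof -
  have "0 \<le> f * (s - N / 2)\<^sup>2" "0 \<le> s * ((f - 1) * b)"
    using assms by simp_all
  then have "s * (f * N - f * s - (f - 1) * b) \<le> f * (N / 2)\<^sup>2"
    by (simp add: algebra_simps power2_eq_square)
  also have "\<dots> = N / 2 * (f * N - f * (N / 2))"
    by (simp add: algebra_simps power2_eq_square)
  finally have "s * (f * N - f * s - (f - 1) * b) / P \<le> N / 2 * (f * N - f * (N / 2)) / P"
    using assms(4) by (intro divide_right_mono) simp_all
  then show ?thesis
    by simp
qed

lemma Neff_const: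
  assumes "N \<le> F"
  shows "Neff (\<lambda>_. N) F k = N"
  using assms by (simp add: Neff_def)

lemma valid_index_Iinv:
  assumes "valid_index n I" "c \<in> {1..calN n}"
  shows "Iinv n I c \<in> Xsets n" "I (Iinv n I c) = c"
  using assms unfolding valid_index_def Iinv_def bij_betw_def
  by (auto intro: inv_into_into f_inv_into_f)

lemma valid_index_fsz_ge_2:
  assumes "valid_index n I" "c \<in> {1..calN n}"
  shows "2 \<le> fsz n I c"
  using valid_index_Iinv(1)[OF assms] by (simp add: fsz_def Xsets_def)

lemma valid_index_Iinv_subset:
  assumes "valid_index n I" "c \<in> {1..calN n}"
  shows "Iinv n I c \<subseteq> {1..n}"
  using valid_index_Iinv(1)[OF assms] by (simp add: Xsets_def)

lemma valid_index_calN: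
  assumes "2 \<le> n" "valid_index n I"
  shows "calN n \<in> {1..calN n}" and "Iinv n I (calN n) = {1..n}"
proof -
  have full: "{1..n} \<in> Xsets n"
    using assms(1) by (simp add: Xsets_def)
  then have I_full: "I {1..n} \<in> {1..calN n}"
    using assms(2) by (auto simp: valid_index_def dest: bij_betwE)
  then show top: "calN n \<in> {1..calN n}"
    by auto
  show "Iinv n I (calN n) = {1..n}"
  proof (rule ccontr)
    assume "Iinv n I (calN n) \<noteq> {1..n}"
    then have "Iinv n I (calN n) \<subset> {1..n}"
      using valid_index_Iinv_subset[OF assms(2) top] by blast
    then have "I (Iinv n I (calN n)) < I {1..n}"
      using assms(2) full valid_index_Iinv(1)[OF assms(2) top] by (auto simp: valid_index_def)
    then show False
      using I_full valid_index_Iinv(2)[OF assms(2) top] by simp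
  qed
qed

lemma valid_index_calN_in_Ssup:
  assumes "2 \<le> n" "valid_index n I" "c \<in> {1..calN n}"
  shows "calN n \<in> Ssup n I c"
  using valid_index_calN[OF assms(1,2)] valid_index_Iinv_subset[OF assms(2,3)]
  by (simp add: Ssup_def)

lemma valid_index_calN_notin_Bsub:
  assumes "2 \<le> n" "valid_index n I" "c \<in> {1..calN n}"
  shows "calN n \<notin> Bsub n I c"
  using valid_index_calN(2)[OF assms(1,2)] valid_index_Iinv_subset[OF assms(2,3)]
  by (auto simp: Bsub_def)

lemma full_group_half_in_Omega:
  assumes "2 \<le> n" "valid_index n I" "0 < N" "real n * N \<le> F"
  shows "(\<lambda>i. if i = calN n then N / 2 else 0) \<in> Omega n I (\<lambda>_. N) F"
    (is "?O \<in> _")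
proof -
  have "N \<le> real n * N"
    using assms(1,3) by simp
  then have Neff: "Neff (\<lambda>_. N) F k = N" for k
    using assms(4) by (intro Neff_const) linarith
  have "0 \<le> (real (fsz n I c) - 1) * ?O c" if "c \<in> {1..calN n}" for c
    using valid_index_fsz_ge_2[OF assms(2) that] assms(3) by simp
  then have "0 \<le> (\<Sum>c = 1..calN n. (real (fsz n I c) - 1) * ?O c)"
    by (rule sum_nonneg)
  moreover have "(\<Sum>i\<in>Stilde n I k. ?O i) \<le> N" for k
    using assms(3) by (simp add: sum.delta Stilde_def)
  ultimately show ?thesis
    using assms(3,4) by (auto simp: Omega_def Neff)
qed

lemma Tobj_le_full_group_half:
  assumes "2 \<le> n" "valid_index n I" "0 < N" "N \<le> F"
    and nonneg: "\<forall>i\<in>{1..calN n}. 0 \<le> Ov i"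
  shows "Tobj n I (\<lambda>_. N) F Ov \<le> Tobj n I (\<lambda>_. N) F (\<lambda>i. if i = calN n then N / 2 else 0)"
    (is "_ \<le> Tobj _ _ _ _ ?O")
  unfolding Tobj_def Neff_const[OF assms(4)]
proof (rule sum_mono)
  fix c assume c: "c \<in> {1..calN n}"
  let ?f = "real (fsz n I c)" and ?P = "\<Prod>k\<in>Iinv n I c. N"
  let ?s = "\<Sum>a\<in>Ssup n I c. Ov a" and ?b = "\<Sum>a\<in>Bsub n I c. Ov a"
  have "0 \<le> ?s" "0 \<le> ?b"
    using nonneg by (auto intro!: sum_nonneg simp: Ssup_def Bsub_def)
  moreover have "1 \<le> ?f"
    using valid_index_fsz_ge_2[OF assms(2) c] by simp
  ultimately have bound:
      "?s / ?P * (?f * N - ?f * ?s - (?f - 1) * ?b) \<le> N / 2 / ?P * (?f * N - ?f * (N / 2))"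
    using assms(3) by (intro summand_le_at_half) simp_all
  have sum_N: "(\<Sum>k\<in>Iinv n I c. N) = ?f * N"
    by (simp add: fsz_def)
  have sum_Ssup: "sum ?O (Ssup n I c) = N / 2"
    using valid_index_calN_in_Ssup[OF assms(1,2) c] by (simp add: Ssup_def)
  have sum_Bsub: "sum ?O (Bsub n I c) = 0"
    using valid_index_calN_notin_Bsub[OF assms(1,2) c] by (intro sum.neutral) auto
  show "?s / ?P * ((\<Sum>k\<in>Iinv n I c. N) - ?f * ?s - (?f - 1) * ?b)
      \<le> sum ?O (Ssup n I c) / ?P *
        ((\<Sum>k\<in>Iinv n I c. N) - ?f * sum ?O (Ssup n I c) - (?f - 1) * sum ?O (Bsub n I c))"
    unfolding sum_N sum_Ssup sum_Bsub using bound by simp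
qed

theorem mainTheorem5:
  fixes n :: nat and I :: "nat set \<Rightarrow> nat" and N F :: real
  assumes "2 \<le> n"
    and "valid_index n I"
    and "0 < N"
    and "real n * N \<le> F"
  defines "Ostar \<equiv> (\<lambda>i. if i = calN n then N / 2 else 0)"
  shows "Ostar \<in> Omega n I (\<lambda>_. N) F \<and>
         (\<forall>Ov\<in>Omega n I (\<lambda>_. N) F. Tobj n I (\<lambda>_. N) F Ov \<le> Tobj n I (\<lambda>_. N) F Ostar)"
proof -
  have "N \<le> real n * N"
    using assms(1,3) by simp
  then have "N \<le> F"
    using assms(4) by linarith
  then have "Tobj n I (\<lambda>_. N) F Ov \<le> Tobj n I (\<lambda>_. N) F Ostar"
    if "Ov \<in> Omega n I (\<lambda>_. N) F" for Ov
    using that assms(1-3) unfolding Ostar_def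
    by (intro Tobj_le_full_group_half) (auto simp: Omega_def)
  then show ?thesis
    using full_group_half_in_Omega[OF assms(1-4)] unfolding Ostar_def by blast
qed

end
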